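(* Let $P$ be a program, $F$ a set of facts, and $E$ an embedding program for $P\cup F$. Then $AS(\mathrm{grnd}(P)\cup F)=AS(E)$.
   Context: A program is a finite set of rules of the form $\alpha_1 \mid \dots \mid \alpha_k \;\texttt{:-}\; \beta_1,\dots,\beta_n, \mathit{not}\ \beta_{n+1},\dots,\mathit{not}\ \beta_m$ ($k,n,m\ge 0$) over atoms $p(\mathbf{X})$, with $H(r)=\{\alpha_1,\dots,\alpha_k\}$, $B^+(r)=\{\beta_1,\dots,\beta_n\}$, $B^-(r)=\{\mathit{not}\ \beta_{n+1},\dots,\mathit{not}\ \beta_m\}$, $B(r)=B^+(r)\cup B^-(r)$. Programs are safe (every variable of a rule occurs in an atom of its positive body) and contain no facts; facts are given separately as a set $F$ of ground atoms, each fact $a$ being regarded as the ground rule with head $\{a\}$ and empty body. All constants come from a fixed finite Herbrand universe $U$. For a set of rules $R$, $\mathrm{Heads}(R)=\bigcup_{r\in R}H(r)$. $\mathrm{grnd}(P)$ is the set of all ground instances of rules of $P$. For a ground program $G$ and a set of ground atoms $A$, the FLP reduct is $G^A=\{r\in G : A\models B(r)\}$; $A$ is an answer set of $G$ if $A$ is a subset-minimal model of $G^A$. $AS(G)$ is the set of answer sets of $G$. Embeddings: for a set of ground rules $R\subseteq \mathrm{grnd}(P)\cup F$ and a rule $r\in \mathrm{grnd}(P)\cup F$: $R\vdash_b r$ iff for every $a\in B^+(r)$ there is $r'\in R$ with $a\in H(r')$; $R\vdash_h r$ iff $r\in R$; $R\vdash r$ iff either $R\nvdash_b r$ or $R\vdash_h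 r$. A set $E\subseteq \mathrm{grnd}(P)\cup F$ is an embedding program for $P\cup F$ if $E\vdash r$ for every $r\in \mathrm{grnd}(P)\cup F$. *)

theory Defs
  imports Main
begin

text \<open>A rule over atoms of type 'a consists of its head
H(r), its positive body B+(r) and the atoms occurring under 'not' in B-(r).\<close>

datatype ('c, 'v) trm = Var 'v | Cst 'c

type_synonym ('p, 'c, 'v) atom = "'p \<times> ('c, 'v) trm list"
type_synonym ('p, 'c) gatom = "'p \<times> 'c list"

record 'a rule =
  Head :: "'a set"
  Bpos :: "'a set"
  Bneg :: "'a set"

fun inst_trm :: "('v \<Rightarrow> 'c) \<Rightarrow> ('c, 'v) trm \<Rightarrow> 'c" where
  "inst_trm \<sigma> (Var v) = \<sigma> v"
| "inst_trm \<sigma> (Cst c) = c"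

definition inst_atom :: "('v \<Rightarrow> 'c) \<Rightarrow> ('p, 'c, 'v) atom \<Rightarrow> ('p, 'c) gatom" where
  "inst_atom \<sigma> a = (fst a, map (inst_trm \<sigma>) (snd a))"

definition inst_rule :: "('v \<Rightarrow> 'c) \<Rightarrow> ('p, 'c, 'v) atom rule \<Rightarrow> ('p, 'c) gatom rule" where
  "inst_rule \<sigma> r = \<lparr>Head = inst_atom \<sigma> ` Head r, Bpos = inst_atom \<sigma> ` Bpos r,
                     Bneg = inst_atom \<sigma> ` Bneg r\<rparr>"

fun vars_trm :: "('c, 'v) trm \<Rightarrow> 'v set" where
  "vars_trm (Var v) = {v}"
| "vars_trm (Cst c) = {}"

fun consts_trm :: "('c, 'v) trm \<Rightarrow> 'c set" where
  "consts_trm (Var v) = {}"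
| "consts_trm (Cst c) = {c}"

definition vars_atoms :: "('p, 'c, 'v) atom set \<Rightarrow> 'v set" where
  "vars_atoms S = (\<Union>a\<in>S. \<Union>t\<in>set (snd a). vars_trm t)"

definition consts_atoms :: "('p, 'c, 'v) atom set \<Rightarrow> 'c set" where
  "consts_atoms S = (\<Union>a\<in>S. \<Union>t\<in>set (snd a). consts_trm t)"

definition consts_rule :: "('p, 'c, 'v) atom rule \<Rightarrow> 'c set" where
  "consts_rule r = consts_atoms (Head r \<union> Bpos r \<union> Bneg r)"

definition safe_rule :: "('p, 'c, 'v) atom rule \<Rightarrow> bool" where
  "safe_rule r \<longleftrightarrow> vars_atoms (Head r \<union> Bpos r \<union> Bneg r) \<subseteq> vars_atoms (Bpos r)"

definition is_fact :: "'a rule \<Rightarrow> bool" where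
  "is_fact r \<longleftrightarrow> Bpos r = {} \<and> Bneg r = {} \<and> (\<exists>a. Head r = {a})"

definition program :: "'c set \<Rightarrow> ('p, 'c, 'v) atom rule set \<Rightarrow> bool" where
  "program U P \<longleftrightarrow> finite P \<and>
     (\<forall>r\<in>P. finite (Head r) \<and> finite (Bpos r) \<and> finite (Bneg r) \<and>
            safe_rule r \<and> \<not> is_fact r \<and> consts_rule r \<subseteq> U)"

definition ground_facts :: "'c set \<Rightarrow> ('p, 'c) gatom set \<Rightarrow> bool" where
  "ground_facts U F \<longleftrightarrow> (\<forall>a\<in>F. set (snd a) \<subseteq> U)"

definition grnd :: "'c set \<Rightarrow> ('p, 'c, 'v) atom rule set \<Rightarrow> ('p, 'c) gatom rule set" where
  "grnd U P = {inst_rule \<sigma> r | r \<sigma>. r \<in> P \<and> (\<forall>v. \<sigma> v \<in> U)}"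

definition fact_rule :: "'a \<Rightarrow> 'a rule" where
  "fact_rule a = \<lparr>Head = {a}, Bpos = {}, Bneg = {}\<rparr>"

definition fact_rules :: "'a set \<Rightarrow> 'a rule set" where
  "fact_rules F = fact_rule ` F"

definition Heads :: "'a rule set \<Rightarrow> 'a set" where
  "Heads R = (\<Union>r\<in>R. Head r)"

definition sat_body :: "'a set \<Rightarrow> 'a rule \<Rightarrow> bool" where
  "sat_body A r \<longleftrightarrow> Bpos r \<subseteq> A \<and> Bneg r \<inter> A = {}"

definition is_model :: "'a set \<Rightarrow> 'a rule set \<Rightarrow> bool" where
  "is_model A G \<longleftrightarrow> (\<forall>r\<in>G. sat_body A r \<longrightarrow> Head r \<inter> A \<noteq> {})"

text \<open>FLP reduct.\<close>
definition reduct :: "'a rule set \<Rightarrow> 'a set \<Rightarrow> 'a rule set" where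
  "reduct G A = {r\<in>G. sat_body A r}"

definition answer_set :: "'a rule set \<Rightarrow> 'a set \<Rightarrow> bool" where
  "answer_set G A \<longleftrightarrow> is_model A (reduct G A) \<and>
     (\<forall>A'. A' \<subset> A \<longrightarrow> \<not> is_model A' (reduct G A))"

definition AS :: "'a rule set \<Rightarrow> 'a set set" where
  "AS G = {A. answer_set G A}"

definition derives_b :: "'a rule set \<Rightarrow> 'a rule \<Rightarrow> bool" where
  "derives_b R r \<longleftrightarrow> (\<forall>a\<in>Bpos r. \<exists>r'\<in>R. a \<in> Head r')"

definition derives_h :: "'a rule set \<Rightarrow> 'a rule \<Rightarrow> bool" where
  "derives_h R r \<longleftrightarrow> r \<in> R"

definition derives :: "'a rule set \<Rightarrow> 'a rule \<Rightarrow> bool" where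
  "derives R r \<longleftrightarrow> \<not> derives_b R r \<or> derives_h R r"

definition embedding_program ::
  "'c set \<Rightarrow> ('p, 'c, 'v) atom rule set \<Rightarrow> ('p, 'c) gatom set \<Rightarrow> ('p, 'c) gatom rule set \<Rightarrow> bool" where
  "embedding_program U P F E \<longleftrightarrow>
     E \<subseteq> grnd U P \<union> fact_rules F \<and> (\<forall>r\<in>grnd U P \<union> fact_rules F. derives E r)"

end

theory Submission
  imports Defs
begin

text \<open>Every rule of the ground program whose positive body is supported by Heads E already
belongs to E. Hence an answer set A of either program lies inside Heads E (otherwise
A \<inter> Heads E would be a smaller model of the reduct), and for such A the two reducts coincide.\<close>

definition body_closed :: "'a rule set \<Rightarrow> 'a rule set \<Rightarrow> bool" where
  "body_closed E X \<longleftrightarrow> (\<forall>r\<in>X. Bpos r \<subseteq> Heads E \<longrightarrow> r \<in> E)"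

lemma body_closed_self: "body_closed E E"
  by (simp add: body_closed_def)

lemma embedding_program_body_closed:
  assumes "embedding_program U P F E"
  shows "body_closed E (grnd U P \<union> fact_rules F)"
  using assms
  unfolding embedding_program_def body_closed_def derives_def derives_b_def derives_h_def Heads_def
  by blast

lemma answer_set_subset_Heads:
  assumes closed: "body_closed E X" and as: "answer_set X A"
  shows "A \<subseteq> Heads E"
proof (rule ccontr)
  assume "\<not> A \<subseteq> Heads E"
  then have smaller: "A \<inter> Heads E \<subset> A" by blast
  have "is_model (A \<inter> Heads E) (reduct X A)"
    unfolding is_model_def
  proof (intro ballI impI)
    fix r assume r: "r \<in> reduct X A" and sat: "sat_body (A \<inter> Heads E) r"
    have "Bpos r \<subseteq> Heads E" using sat by (auto simp: sat_body_def)
    with closed r have "Head r \<subseteq> Heads E"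
      by (auto simp: body_closed_def reduct_def Heads_def)
    moreover have "Head r \<inter> A \<noteq> {}"
      using as r by (auto simp: answer_set_def is_model_def reduct_def)
    ultimately show "Head r \<inter> (A \<inter> Heads E) \<noteq> {}" by blast
  qed
  with as smaller show False by (auto simp: answer_set_def)
qed

lemma reduct_eq_if_body_closed:
  assumes "body_closed E X" and "E \<subseteq> X" and "A \<subseteq> Heads E"
  shows "reduct X A = reduct E A"
  using assms by (auto simp: body_closed_def reduct_def sat_body_def)

lemma AS_eq_if_body_closed:
  assumes closed: "body_closed E X" and sub: "E \<subseteq> X"
  shows "AS X = AS E"
proof (rule set_eqI)
  fix A
  have "reduct X A = reduct E A" if "answer_set Y A" and "body_closed E Y" for Y
    using reduct_eq_if_body_closed[OF closed sub answer_set_subset_Heads[OF that(2,1)]] .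
  from this[of X] this[of E] show "A \<in> AS X \<longleftrightarrow> A \<in> AS E"
    using closed body_closed_self unfolding AS_def mem_Collect_eq answer_set_def by metis
qed

theorem mainTheorem2:
  fixes U :: "'c set" and P :: "('p, 'c, 'v) atom rule set"
    and F :: "('p, 'c) gatom set" and E :: "('p, 'c) gatom rule set"
  assumes "finite U"
    and "program U P"
    and "ground_facts U F"
    and "embedding_program U P F E"
  shows "AS (grnd U P \<union> fact_rules F) = AS E"
proof (rule AS_eq_if_body_closed)
  show "body_closed E (grnd U P \<union> fact_rules F)"
    using assms(4) by (rule embedding_program_body_closed)
  show "E \<subseteq> grnd U P \<union> fact_rules F"
    using assms(4) by (simp add: embedding_program_def)
qed

end
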